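(* Let $\mathbf G_*=(\partial:G_1\to G_0)$ be a crossed module, and let $\mathsf H^0(G_0,G_1)=\{a\in G_1:{}^xa=a\ \forall x\in G_0\}$. Then $\partial$ maps $\mathsf H^0(G_0,G_1)$ into $\mathsf Z_{G_1}(G_0)$, and $\partial:\mathsf H^0(G_0,G_1)\to\mathsf Z_{G_1}(G_0)$ with trivial action is a crossed module $\mathbf Z^{Nor}_*(\mathbf G_* )$. Setting $j_1$ to be the inclusion $\mathsf H^0(G_0,G_1)\subseteq G_1$ and $j_0(x)=(x,\mathbf 1)$, the pair $j_*=(j_1,j_0)$ is an injective morphism of crossed modules $\mathbf Z^{Nor}_*(\mathbf G_* )\to\mathbf Z_*(\mathbf G_* )$ which induces an isomorphism on $\pi_1$ and a monomorphism on $\pi_0$.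
   Context: A crossed module: groups $H_1,H_0$, a homomorphism $\partial:H_1\to H_0$ and a left action $(x,a)\mapsto{}^xa$ of $H_0$ on $H_1$ by automorphisms, with $\partial({}^x a)=x\partial(a)x^{-1}$ and ${}^{\partial(b)}a=bab^{-1}$; $\pi_0=H_0/\mathrm{Im}\partial$, $\pi_1=\ker\partial$. A morphism of crossed modules $(\alpha_1,\alpha_0)$ consists of homomorphisms commuting with $\partial$ and satisfying $\alpha_1({}^xa)={}^{\alpha_0(x)}\alpha_1(a)$. $\mathsf Z_{G_1}(G_0)$ is the set of elements $x$ of the centre of $G_0$ with ${}^xa=a$ for all $a\in G_1$. Commutators $[x,t]=xtx^{-1}t^{-1}$. $\mathbf Z_0(\mathbf G_* )$ is the group of pairs $(x,\xi)$, $x\in G_0$, $\xi:G_0\to G_1$ with $\partial\xi(t)=[x,t]$, $\xi(\partial a)={}^xa\,a^{-1}$, $\xi(st)=\xi(s)\,{}^s\xi(t)$, product $(x,\xi)(y,\eta)=(xy,t\mapsto{}^x\eta(t)\xi(t))$; $\mathbf 1$ is the constant map with value $1$. $\mathbf Z_*(\mathbf G_* )$ is the crossed module $\delta:G_1\to\mathbf Z_0(\mathbf G_* )$, $\delta(c)=(\partial c,\ t\mapsto c\,({}^tc)^{-1})$, with action ${}^{(x,\xi)}a={}^xa$. *)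

theory Defs
  imports "HOL-Algebra.Algebra"
begin

definition crossed_module ::
  "'a monoid \<Rightarrow> 'b monoid \<Rightarrow> ('a \<Rightarrow> 'b) \<Rightarrow> ('b \<Rightarrow> 'a \<Rightarrow> 'a) \<Rightarrow> bool" where
  "crossed_module H1 H0 d act \<longleftrightarrow>
     group H1 \<and> group H0 \<and> d \<in> hom H1 H0 \<and>
     (\<forall>x\<in>carrier H0. act x \<in> iso H1 H1) \<and>
     (\<forall>a\<in>carrier H1. act \<one>\<^bsub>H0\<^esub> a = a) \<and>
     (\<forall>x\<in>carrier H0. \<forall>y\<in>carrier H0. \<forall>a\<in>carrier H1.
        act (x \<otimes>\<^bsub>H0\<^esub> y) a = act x (act y a)) \<and>
     (\<forall>x\<in>carrier H0. \<forall>a\<in>carrier H1.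
        d (act x a) = x \<otimes>\<^bsub>H0\<^esub> d a \<otimes>\<^bsub>H0\<^esub> inv\<^bsub>H0\<^esub> x) \<and>
     (\<forall>a\<in>carrier H1. \<forall>b\<in>carrier H1.
        act (d b) a = b \<otimes>\<^bsub>H1\<^esub> a \<otimes>\<^bsub>H1\<^esub> inv\<^bsub>H1\<^esub> b)"

definition cm_morphism ::
  "'a monoid \<Rightarrow> 'b monoid \<Rightarrow> ('a \<Rightarrow> 'b) \<Rightarrow> ('b \<Rightarrow> 'a \<Rightarrow> 'a) \<Rightarrow>
   'c monoid \<Rightarrow> 'd monoid \<Rightarrow> ('c \<Rightarrow> 'd) \<Rightarrow> ('d \<Rightarrow> 'c \<Rightarrow> 'c) \<Rightarrow>
   ('a \<Rightarrow> 'c) \<Rightarrow> ('b \<Rightarrow> 'd) \<Rightarrow> bool" where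
  "cm_morphism H1 H0 d act K1 K0 d' act' f1 f0 \<longleftrightarrow>
     f1 \<in> hom H1 K1 \<and> f0 \<in> hom H0 K0 \<and>
     (\<forall>a\<in>carrier H1. d' (f1 a) = f0 (d a)) \<and>
     (\<forall>x\<in>carrier H0. \<forall>a\<in>carrier H1. f1 (act x a) = act' (f0 x) (f1 a))"

definition pi1 :: "'a monoid \<Rightarrow> 'b monoid \<Rightarrow> ('a \<Rightarrow> 'b) \<Rightarrow> 'a monoid" where
  "pi1 H1 H0 d = H1\<lparr>carrier := kernel H1 H0 d\<rparr>"

definition pi0 :: "'a monoid \<Rightarrow> 'b monoid \<Rightarrow> ('a \<Rightarrow> 'b) \<Rightarrow> 'b set monoid" where
  "pi0 H1 H0 d = H0 Mod (d ` carrier H1)"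

text \<open>Map induced on pi_0 by f0: the coset (Im d) x goes to the coset (Im d') f0(x),
  written as (Im d') f0(C), which is independent of representatives.\<close>
definition pi0_map :: "'c monoid \<Rightarrow> 'd monoid \<Rightarrow> ('c \<Rightarrow> 'd) \<Rightarrow> ('b \<Rightarrow> 'd) \<Rightarrow> 'b set \<Rightarrow> 'd set" where
  "pi0_map K1 K0 d' f0 C = (d' ` carrier K1) <#>\<^bsub>K0\<^esub> (f0 ` C)"

definition commutator :: "'b monoid \<Rightarrow> 'b \<Rightarrow> 'b \<Rightarrow> 'b" where
  "commutator G x t = x \<otimes>\<^bsub>G\<^esub> t \<otimes>\<^bsub>G\<^esub> inv\<^bsub>G\<^esub> x \<otimes>\<^bsub>G\<^esub> inv\<^bsub>G\<^esub> t"

definition Z0 :: "'a monoid \<Rightarrow> 'b monoid \<Rightarrow> ('a \<Rightarrow> 'b) \<Rightarrow> ('b \<Rightarrow> 'a \<Rightarrow> 'a)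
                   \<Rightarrow> ('b \<times> ('b \<Rightarrow> 'a)) monoid" where
  "Z0 G1 G0 d act =
    \<lparr> carrier = {(x, \<xi>). x \<in> carrier G0 \<and> \<xi> \<in> carrier G0 \<rightarrow>\<^sub>E carrier G1 \<and>
                   (\<forall>t\<in>carrier G0. d (\<xi> t) = commutator G0 x t) \<and>
                   (\<forall>a\<in>carrier G1. \<xi> (d a) = act x a \<otimes>\<^bsub>G1\<^esub> inv\<^bsub>G1\<^esub> a) \<and>
                   (\<forall>s\<in>carrier G0. \<forall>t\<in>carrier G0.
                       \<xi> (s \<otimes>\<^bsub>G0\<^esub> t) = \<xi> s \<otimes>\<^bsub>G1\<^esub> act s (\<xi> t))},
      monoid.mult = (\<lambda>(x, \<xi>) (y, \<eta>). (x \<otimes>\<^bsub>G0\<^esub> y,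
                   \<lambda>t\<in>carrier G0. act x (\<eta> t) \<otimes>\<^bsub>G1\<^esub> \<xi> t)),
      monoid.one = (\<one>\<^bsub>G0\<^esub>, \<lambda>t\<in>carrier G0. \<one>\<^bsub>G1\<^esub>) \<rparr>"

definition Zdelta :: "'a monoid \<Rightarrow> 'b monoid \<Rightarrow> ('a \<Rightarrow> 'b) \<Rightarrow> ('b \<Rightarrow> 'a \<Rightarrow> 'a)
                       \<Rightarrow> 'a \<Rightarrow> 'b \<times> ('b \<Rightarrow> 'a)" where
  "Zdelta G1 G0 d act c = (d c, \<lambda>t\<in>carrier G0. c \<otimes>\<^bsub>G1\<^esub> inv\<^bsub>G1\<^esub> (act t c))"

definition Zact :: "('b \<Rightarrow> 'a \<Rightarrow> 'a) \<Rightarrow> 'b \<times> ('b \<Rightarrow> 'a) \<Rightarrow> 'a \<Rightarrow> 'a" where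
  "Zact act p a = act (fst p) a"

definition H0inv :: "'a monoid \<Rightarrow> 'b monoid \<Rightarrow> ('b \<Rightarrow> 'a \<Rightarrow> 'a) \<Rightarrow> 'a set" where
  "H0inv G1 G0 act = {a \<in> carrier G1. \<forall>x\<in>carrier G0. act x a = a}"

definition ZG1 :: "'a monoid \<Rightarrow> 'b monoid \<Rightarrow> ('b \<Rightarrow> 'a \<Rightarrow> 'a) \<Rightarrow> 'b set" where
  "ZG1 G1 G0 act = {x \<in> carrier G0. (\<forall>t\<in>carrier G0. x \<otimes>\<^bsub>G0\<^esub> t = t \<otimes>\<^bsub>G0\<^esub> x) \<and>
                                     (\<forall>a\<in>carrier G1. act x a = a)}"

definition j0 :: "'a monoid \<Rightarrow> 'b monoid \<Rightarrow> 'b \<Rightarrow> 'b \<times> ('b \<Rightarrow> 'a)" where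
  "j0 G1 G0 x = (x, \<lambda>t\<in>carrier G0. \<one>\<^bsub>G1\<^esub>)"

end

(*
  Invariant elements of G1 are central in G1 by the Peiffer identity, so their boundaries are
  central in G0 and act trivially; this yields the crossed module of invariants. Write
  delta c = (d c, xi_c) with the principal derivation xi_c t = c (t.c)^-1, so that
  delta c * j0 z = (d c * z, xi_c). The cocycle identity for xi shows that these pairs multiply
  as (d c * x, xi_c) (d c' * y, xi_c') = (d (c c') * x y, xi_(c c')) whenever x is central and
  acts trivially, which makes j0 compatible with the coset products. Finally xi_c is trivial
  exactly when c is invariant: hence ker delta = ker d on the invariants, and the coset of j0 x
  modulo Im delta determines x modulo d(H^0), which is injectivity on pi_0.
*)
theory Submission
  imports Defs
begin

lemma (in group) inv_mult_cancel_left [simp]: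
  "x \<in> carrier G \<Longrightarrow> y \<in> carrier G \<Longrightarrow> inv x \<otimes> (x \<otimes> y) = y"
  by (simp flip: m_assoc)

lemma (in group) mult_inv_cancel_left [simp]:
  "x \<in> carrier G \<Longrightarrow> y \<in> carrier G \<Longrightarrow> x \<otimes> (inv x \<otimes> y) = y"
  by (simp flip: m_assoc)

locale xmod =
  fixes G1 :: "'a monoid" and G0 :: "'b monoid" and d :: "'a \<Rightarrow> 'b" and act :: "'b \<Rightarrow> 'a \<Rightarrow> 'a"
  assumes crossed_module: "crossed_module G1 G0 d act"
begin

abbreviation "H0 \<equiv> H0inv G1 G0 act"
abbreviation "ZG \<equiv> ZG1 G1 G0 act"
abbreviation "N1 \<equiv> G1\<lparr>carrier := H0\<rparr>"
abbreviation "N0 \<equiv> G0\<lparr>carrier := ZG\<rparr>"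
abbreviation "Z \<equiv> Z0 G1 G0 d act"
abbreviation "\<delta> \<equiv> Zdelta G1 G0 d act"

sublocale G1: group G1 using crossed_module by (simp add: crossed_module_def)
sublocale G0: group G0 using crossed_module by (simp add: crossed_module_def)
sublocale d: group_hom G1 G0 d
  using crossed_module by (simp add: crossed_module_def group_hom_def group_hom_axioms_def)

lemma act_group_hom: "x \<in> carrier G0 \<Longrightarrow> group_hom G1 G1 (act x)"
  using crossed_module
  by (simp add: crossed_module_def iso_def group_hom_def group_hom_axioms_def G1.group_axioms)

lemma act_closed [simp]: "x \<in> carrier G0 \<Longrightarrow> a \<in> carrier G1 \<Longrightarrow> act x a \<in> carrier G1"
  using group_hom.hom_closed[OF act_group_hom] .

lemma act_mult [simp]: "x \<in> carrier G0 \<Longrightarrow> a \<in> carrier G1 \<Longrightarrow> b \<in> carrier G1 \<Longrightarrow>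
    act x (a \<otimes>\<^bsub>G1\<^esub> b) = act x a \<otimes>\<^bsub>G1\<^esub> act x b"
  using group_hom.hom_mult[OF act_group_hom] .

lemma act_one [simp]: "x \<in> carrier G0 \<Longrightarrow> act x \<one>\<^bsub>G1\<^esub> = \<one>\<^bsub>G1\<^esub>"
  using group_hom.hom_one[OF act_group_hom] .

lemma act_inv [simp]: "x \<in> carrier G0 \<Longrightarrow> a \<in> carrier G1 \<Longrightarrow>
    act x (inv\<^bsub>G1\<^esub> a) = inv\<^bsub>G1\<^esub> act x a"
  using group_hom.hom_inv[OF act_group_hom] .

lemma act_one_left [simp]: "a \<in> carrier G1 \<Longrightarrow> act \<one>\<^bsub>G0\<^esub> a = a"
  using crossed_module by (simp add: crossed_module_def)

lemma act_mult_left: "x \<in> carrier G0 \<Longrightarrow> y \<in> carrier G0 \<Longrightarrow> a \<in> carrier G1 \<Longrightarrow>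
    act (x \<otimes>\<^bsub>G0\<^esub> y) a = act x (act y a)"
  using crossed_module by (simp add: crossed_module_def)

lemma d_act: "x \<in> carrier G0 \<Longrightarrow> a \<in> carrier G1 \<Longrightarrow>
    d (act x a) = x \<otimes>\<^bsub>G0\<^esub> d a \<otimes>\<^bsub>G0\<^esub> inv\<^bsub>G0\<^esub> x"
  using crossed_module by (simp add: crossed_module_def)

lemma act_d: "a \<in> carrier G1 \<Longrightarrow> b \<in> carrier G1 \<Longrightarrow>
    act (d b) a = b \<otimes>\<^bsub>G1\<^esub> a \<otimes>\<^bsub>G1\<^esub> inv\<^bsub>G1\<^esub> b"
  using crossed_module by (simp add: crossed_module_def)

lemma H0inv_carrier: "a \<in> H0 \<Longrightarrow> a \<in> carrier G1"
  by (simp add: H0inv_def)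

lemma H0inv_fixed: "a \<in> H0 \<Longrightarrow> x \<in> carrier G0 \<Longrightarrow> act x a = a"
  by (simp add: H0inv_def)

lemma ZG1_carrier: "x \<in> ZG \<Longrightarrow> x \<in> carrier G0"
  by (simp add: ZG1_def)

lemma ZG1_central: "x \<in> ZG \<Longrightarrow> t \<in> carrier G0 \<Longrightarrow> x \<otimes>\<^bsub>G0\<^esub> t = t \<otimes>\<^bsub>G0\<^esub> x"
  by (simp add: ZG1_def)

lemma ZG1_acts_trivially: "x \<in> ZG \<Longrightarrow> a \<in> carrier G1 \<Longrightarrow> act x a = a"
  by (simp add: ZG1_def)

lemma H0inv_subgroup: "subgroup H0 G1"
  by (rule G1.subgroupI) (auto simp: H0inv_def)

lemma ZG1I:
  "x \<in> carrier G0 \<Longrightarrow> (\<And>t. t \<in> carrier G0 \<Longrightarrow> x \<otimes>\<^bsub>G0\<^esub> t = t \<otimes>\<^bsub>G0\<^esub> x) \<Longrightarrow>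
    (\<And>a. a \<in> carrier G1 \<Longrightarrow> act x a = a) \<Longrightarrow> x \<in> ZG"
  by (simp add: ZG1_def)

lemma ZG1_subgroup: "subgroup ZG G0"
proof (rule G0.subgroupI)
  show "ZG \<subseteq> carrier G0" by (auto simp: ZG1_def)
  have "\<one>\<^bsub>G0\<^esub> \<in> ZG" by (rule ZG1I) simp_all
  then show "ZG \<noteq> {}" by blast
next
  fix x assume x: "x \<in> ZG"
  note xc = ZG1_carrier[OF x]
  show "inv\<^bsub>G0\<^esub> x \<in> ZG"
  proof (rule ZG1I)
    fix t assume t: "t \<in> carrier G0"
    have "t \<otimes>\<^bsub>G0\<^esub> inv\<^bsub>G0\<^esub> x = inv\<^bsub>G0\<^esub> x \<otimes>\<^bsub>G0\<^esub> (x \<otimes>\<^bsub>G0\<^esub> t) \<otimes>\<^bsub>G0\<^esub> inv\<^bsub>G0\<^esub> x"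
      using xc t by simp
    also have "\<dots> = inv\<^bsub>G0\<^esub> x \<otimes>\<^bsub>G0\<^esub> (t \<otimes>\<^bsub>G0\<^esub> x) \<otimes>\<^bsub>G0\<^esub> inv\<^bsub>G0\<^esub> x"
      by (simp only: ZG1_central[OF x t])
    also have "\<dots> = inv\<^bsub>G0\<^esub> x \<otimes>\<^bsub>G0\<^esub> t"
      using xc t by (simp add: G0.m_assoc)
    finally show "inv\<^bsub>G0\<^esub> x \<otimes>\<^bsub>G0\<^esub> t = t \<otimes>\<^bsub>G0\<^esub> inv\<^bsub>G0\<^esub> x" by (rule sym)
  next
    fix a assume a: "a \<in> carrier G1"
    have "act (inv\<^bsub>G0\<^esub> x) (act x a) = a"
      using act_mult_left[of "inv\<^bsub>G0\<^esub> x" x a, symmetric] xc a by simp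
    then show "act (inv\<^bsub>G0\<^esub> x) a = a" by (simp only: ZG1_acts_trivially[OF x a])
  qed (use xc in simp)
next
  fix x y assume x: "x \<in> ZG" and y: "y \<in> ZG"
  note xc = ZG1_carrier[OF x] and yc = ZG1_carrier[OF y]
  show "x \<otimes>\<^bsub>G0\<^esub> y \<in> ZG"
  proof (rule ZG1I)
    fix t assume t: "t \<in> carrier G0"
    have "x \<otimes>\<^bsub>G0\<^esub> y \<otimes>\<^bsub>G0\<^esub> t = x \<otimes>\<^bsub>G0\<^esub> t \<otimes>\<^bsub>G0\<^esub> y"
      using xc yc t by (simp add: G0.m_assoc ZG1_central[OF y t])
    also have "\<dots> = t \<otimes>\<^bsub>G0\<^esub> (x \<otimes>\<^bsub>G0\<^esub> y)"
      using xc yc t by (simp add: G0.m_assoc ZG1_central[OF x t])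
    finally show "x \<otimes>\<^bsub>G0\<^esub> y \<otimes>\<^bsub>G0\<^esub> t = t \<otimes>\<^bsub>G0\<^esub> (x \<otimes>\<^bsub>G0\<^esub> y)" .
  next
    fix a assume "a \<in> carrier G1"
    then show "act (x \<otimes>\<^bsub>G0\<^esub> y) a = a"
      using xc yc by (simp add: act_mult_left ZG1_acts_trivially[OF x] ZG1_acts_trivially[OF y])
  qed (use xc yc in simp)
qed

lemma H0inv_central: "a \<in> H0 \<Longrightarrow> b \<in> carrier G1 \<Longrightarrow> b \<otimes>\<^bsub>G1\<^esub> a = a \<otimes>\<^bsub>G1\<^esub> b"
proof -
  assume a: "a \<in> H0" and b: "b \<in> carrier G1"
  note ac = H0inv_carrier[OF a]
  have "a = b \<otimes>\<^bsub>G1\<^esub> a \<otimes>\<^bsub>G1\<^esub> inv\<^bsub>G1\<^esub> b"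
    using act_d[OF ac b] H0inv_fixed[OF a d.hom_closed[OF b]] by simp
  then show ?thesis
    using G1.inv_solve_right[OF ac G1.m_closed[OF b ac] b] by blast
qed

lemma d_H0inv: "a \<in> H0 \<Longrightarrow> d a \<in> ZG"
proof (rule ZG1I)
  assume a: "a \<in> H0"
  note ac = H0inv_carrier[OF a]
  show "d a \<in> carrier G0" using ac by simp
  fix t assume t: "t \<in> carrier G0"
  have "d a = t \<otimes>\<^bsub>G0\<^esub> d a \<otimes>\<^bsub>G0\<^esub> inv\<^bsub>G0\<^esub> t"
    using d_act[OF t ac] H0inv_fixed[OF a t] by simp
  then show "d a \<otimes>\<^bsub>G0\<^esub> t = t \<otimes>\<^bsub>G0\<^esub> d a"
    using G0.inv_solve_right[OF d.hom_closed[OF ac] G0.m_closed[OF t d.hom_closed[OF ac]] t]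
    by simp
next
  fix b assume a: "a \<in> H0" and b: "b \<in> carrier G1"
  note ac = H0inv_carrier[OF a]
  have "act (d a) b = b \<otimes>\<^bsub>G1\<^esub> a \<otimes>\<^bsub>G1\<^esub> inv\<^bsub>G1\<^esub> a"
    using act_d[OF b ac] H0inv_central[OF a b] by simp
  then show "act (d a) b = b" using ac b by (simp add: G1.m_assoc)
qed

lemma crossed_module_invariants: "crossed_module N1 N0 d (\<lambda>x a. a)"
  unfolding crossed_module_def
proof (intro conjI ballI)
  show "group N1" by (rule G1.subgroup_imp_group[OF H0inv_subgroup])
  show "group N0" by (rule G0.subgroup_imp_group[OF ZG1_subgroup])
  show "d \<in> hom N1 N0" by (auto simp: hom_def d_H0inv H0inv_carrier)
  show "(\<lambda>a. a) \<in> iso N1 N1" by (auto simp: iso_def hom_def bij_betw_def)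
next
  fix x a assume "x \<in> carrier N0" and "a \<in> carrier N1"
  then have x: "x \<in> ZG" and a: "a \<in> H0" by simp_all
  note xc = ZG1_carrier[OF x] and ac = H0inv_carrier[OF a]
  show "d a = x \<otimes>\<^bsub>N0\<^esub> d a \<otimes>\<^bsub>N0\<^esub> inv\<^bsub>N0\<^esub> x"
    using ZG1_central[OF x d.hom_closed[OF ac]] xc ac ZG1_subgroup x
    by (simp add: G0.m_assoc)
next
  fix a b assume "a \<in> carrier N1" and "b \<in> carrier N1"
  then have a: "a \<in> H0" and b: "b \<in> H0" by simp_all
  show "a = b \<otimes>\<^bsub>N1\<^esub> a \<otimes>\<^bsub>N1\<^esub> inv\<^bsub>N1\<^esub> b"
    using H0inv_carrier[OF a] H0inv_carrier[OF b] H0inv_subgroup b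
    by (simp add: G1.m_assoc flip: H0inv_central[OF b H0inv_carrier[OF a]])
qed simp_all

definition principal_der :: "'a \<Rightarrow> 'b \<Rightarrow> 'a" where
  "principal_der c = (\<lambda>t\<in>carrier G0. c \<otimes>\<^bsub>G1\<^esub> inv\<^bsub>G1\<^esub> (act t c))"

lemma Zdelta_eq: "\<delta> c = (d c, principal_der c)"
  by (simp add: Zdelta_def principal_der_def)

lemma principal_der_one: "principal_der \<one>\<^bsub>G1\<^esub> = (\<lambda>t\<in>carrier G0. \<one>\<^bsub>G1\<^esub>)"
  by (simp add: principal_der_def cong: restrict_cong)

lemma j0_eq: "j0 G1 G0 x = (x, principal_der \<one>\<^bsub>G1\<^esub>)"
  by (simp add: j0_def principal_der_one)

lemma Z0_one: "\<one>\<^bsub>Z\<^esub> = (\<one>\<^bsub>G0\<^esub>, principal_der \<one>\<^bsub>G1\<^esub>)"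
  by (simp add: Z0_def principal_der_one)

lemma Z0_mult:
  "(x, \<xi>) \<otimes>\<^bsub>Z\<^esub> (y, \<eta>) = (x \<otimes>\<^bsub>G0\<^esub> y, \<lambda>t\<in>carrier G0. act x (\<eta> t) \<otimes>\<^bsub>G1\<^esub> \<xi> t)"
  by (simp add: Z0_def)

lemma principal_der_eq_one_iff:
  assumes c: "c \<in> carrier G1"
  shows "principal_der c = principal_der \<one>\<^bsub>G1\<^esub> \<longleftrightarrow> c \<in> H0"
proof -
  have "principal_der c = principal_der \<one>\<^bsub>G1\<^esub> \<longleftrightarrow>
      (\<forall>t\<in>carrier G0. c \<otimes>\<^bsub>G1\<^esub> inv\<^bsub>G1\<^esub> act t c = \<one>\<^bsub>G1\<^esub>)"
    by (auto simp: principal_der_one principal_der_def fun_eq_iff)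
  also have "\<dots> \<longleftrightarrow> (\<forall>t\<in>carrier G0. act t c = c)"
    using c G1.inv_solve_right'[OF G1.one_closed c act_closed] by auto
  finally show ?thesis using c by (simp add: H0inv_def)
qed

lemma principal_der_mult_H0inv:
  assumes c: "c \<in> carrier G1" and a: "a \<in> H0"
  shows "principal_der (c \<otimes>\<^bsub>G1\<^esub> a) = principal_der c"
  unfolding principal_der_def
proof (rule restrict_ext)
  fix t assume t: "t \<in> carrier G0"
  note ac = H0inv_carrier[OF a]
  show "c \<otimes>\<^bsub>G1\<^esub> a \<otimes>\<^bsub>G1\<^esub> inv\<^bsub>G1\<^esub> act t (c \<otimes>\<^bsub>G1\<^esub> a) = c \<otimes>\<^bsub>G1\<^esub> inv\<^bsub>G1\<^esub> act t c"
    using c ac t H0inv_fixed[OF a t] by (simp add: G1.inv_mult_group G1.m_assoc)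
qed

text \<open>The cocycle identity of the principal derivation, absorbed by the Peiffer identity.\<close>
lemma principal_der_mult:
  assumes c: "c \<in> carrier G1" and c': "c' \<in> carrier G1"
  shows "principal_der (c \<otimes>\<^bsub>G1\<^esub> c') =
    (\<lambda>t\<in>carrier G0. act (d c) (principal_der c' t) \<otimes>\<^bsub>G1\<^esub> principal_der c t)"
  unfolding principal_der_def
proof (rule restrict_ext)
  fix t assume t: "t \<in> carrier G0"
  have "act (d c) (c' \<otimes>\<^bsub>G1\<^esub> inv\<^bsub>G1\<^esub> act t c') =
      c \<otimes>\<^bsub>G1\<^esub> (c' \<otimes>\<^bsub>G1\<^esub> inv\<^bsub>G1\<^esub> act t c') \<otimes>\<^bsub>G1\<^esub> inv\<^bsub>G1\<^esub> c"
    by (rule act_d) (use c c' t in simp_all)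
  then show "c \<otimes>\<^bsub>G1\<^esub> c' \<otimes>\<^bsub>G1\<^esub> inv\<^bsub>G1\<^esub> act t (c \<otimes>\<^bsub>G1\<^esub> c') =
      act (d c) ((\<lambda>t\<in>carrier G0. c' \<otimes>\<^bsub>G1\<^esub> inv\<^bsub>G1\<^esub> act t c') t) \<otimes>\<^bsub>G1\<^esub>
      (\<lambda>t\<in>carrier G0. c \<otimes>\<^bsub>G1\<^esub> inv\<^bsub>G1\<^esub> act t c) t"
    using c c' t by (simp add: G1.inv_mult_group G1.m_assoc)
qed

lemma Z0_mult_principal:
  assumes c: "c \<in> carrier G1" and c': "c' \<in> carrier G1"
    and x: "x \<in> ZG" and y: "y \<in> carrier G0"
  shows "(d c \<otimes>\<^bsub>G0\<^esub> x, principal_der c) \<otimes>\<^bsub>Z\<^esub> (d c' \<otimes>\<^bsub>G0\<^esub> y, principal_der c') =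
    (d (c \<otimes>\<^bsub>G1\<^esub> c') \<otimes>\<^bsub>G0\<^esub> (x \<otimes>\<^bsub>G0\<^esub> y), principal_der (c \<otimes>\<^bsub>G1\<^esub> c'))"
proof -
  note xc = ZG1_carrier[OF x]
  have "d c \<otimes>\<^bsub>G0\<^esub> x \<otimes>\<^bsub>G0\<^esub> (d c' \<otimes>\<^bsub>G0\<^esub> y) = d c \<otimes>\<^bsub>G0\<^esub> (x \<otimes>\<^bsub>G0\<^esub> d c') \<otimes>\<^bsub>G0\<^esub> y"
    using c c' xc y by (simp add: G0.m_assoc)
  also have "\<dots> = d (c \<otimes>\<^bsub>G1\<^esub> c') \<otimes>\<^bsub>G0\<^esub> (x \<otimes>\<^bsub>G0\<^esub> y)"
    using c c' xc y by (simp add: ZG1_central[OF x] G0.m_assoc)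
  finally have base: "d c \<otimes>\<^bsub>G0\<^esub> x \<otimes>\<^bsub>G0\<^esub> (d c' \<otimes>\<^bsub>G0\<^esub> y) = d (c \<otimes>\<^bsub>G1\<^esub> c') \<otimes>\<^bsub>G0\<^esub> (x \<otimes>\<^bsub>G0\<^esub> y)" .
  have "act (d c \<otimes>\<^bsub>G0\<^esub> x) (principal_der c' t) = act (d c) (principal_der c' t)"
    if t: "t \<in> carrier G0" for t
    using c c' t xc by (simp add: act_mult_left ZG1_acts_trivially[OF x] principal_der_def)
  then have cochain: "(\<lambda>t\<in>carrier G0. act (d c \<otimes>\<^bsub>G0\<^esub> x) (principal_der c' t) \<otimes>\<^bsub>G1\<^esub> principal_der c t) =
      principal_der (c \<otimes>\<^bsub>G1\<^esub> c')"
    by (simp add: principal_der_mult[OF c c'] cong: restrict_cong)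
  show ?thesis by (simp add: Z0_mult base cochain)
qed

lemma Zdelta_mult_j0:
  "c \<in> carrier G1 \<Longrightarrow> z \<in> carrier G0 \<Longrightarrow> \<delta> c \<otimes>\<^bsub>Z\<^esub> j0 G1 G0 z = (d c \<otimes>\<^bsub>G0\<^esub> z, principal_der c)"
  using Z0_mult_principal[of c "\<one>\<^bsub>G1\<^esub>" "\<one>\<^bsub>G0\<^esub>" z] ZG1_subgroup
  by (simp add: Zdelta_eq j0_eq subgroup.one_closed)

lemma Zdelta_H0inv: "a \<in> H0 \<Longrightarrow> \<delta> a = j0 G1 G0 (d a)"
  using principal_der_mult_H0inv[of "\<one>\<^bsub>G1\<^esub>" a] H0inv_carrier[of a]
  by (simp add: Zdelta_eq j0_eq)

lemma j0_in_Z0: "x \<in> ZG \<Longrightarrow> j0 G1 G0 x \<in> carrier Z"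
  using ZG1_carrier[of x] ZG1_central[of x] ZG1_acts_trivially[of x]
  by (auto simp: Z0_def j0_def commutator_def G0.m_assoc)

lemma j0_hom: "j0 G1 G0 \<in> hom N0 Z"
proof (rule homI)
  fix x y assume "x \<in> carrier N0" "y \<in> carrier N0"
  then show "j0 G1 G0 (x \<otimes>\<^bsub>N0\<^esub> y) = j0 G1 G0 x \<otimes>\<^bsub>Z\<^esub> j0 G1 G0 y"
    using ZG1_carrier by (auto simp: j0_def Z0_mult cong: restrict_cong)
qed (simp add: j0_in_Z0)

lemma invariants_morphism: "cm_morphism N1 N0 d (\<lambda>x a. a) G1 Z \<delta> (Zact act) (\<lambda>a. a) (j0 G1 G0)"
  unfolding cm_morphism_def
proof (intro conjI ballI)
  show "(\<lambda>a. a) \<in> hom N1 G1" by (auto simp: hom_def H0inv_carrier)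
  show "j0 G1 G0 \<in> hom N0 Z" by (rule j0_hom)
qed (auto simp: Zdelta_H0inv Zact_def j0_def H0inv_fixed ZG1_carrier)

lemma kernel_Zdelta: "kernel G1 Z \<delta> = kernel N1 N0 d"
  using principal_der_eq_one_iff H0inv_carrier
  by (auto simp: kernel_def Zdelta_eq Z0_one)

lemma pi1_iso: "(\<lambda>a. a) \<in> iso (pi1 N1 N0 d) (pi1 G1 Z \<delta>)"
  by (auto simp: iso_def hom_def bij_betw_def pi1_def kernel_Zdelta)

lemma Zdelta_rcoset:
  "z \<in> carrier G0 \<Longrightarrow>
    (\<delta> ` carrier G1) #>\<^bsub>Z\<^esub> j0 G1 G0 z = {(d c \<otimes>\<^bsub>G0\<^esub> z, principal_der c) | c. c \<in> carrier G1}"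
  by (auto simp: r_coset_def Zdelta_mult_j0)

lemma Zdelta_rcoset_mult:
  assumes x: "x \<in> ZG" and y: "y \<in> carrier G0"
  shows "((\<delta> ` carrier G1) #>\<^bsub>Z\<^esub> j0 G1 G0 x) <#>\<^bsub>Z\<^esub> ((\<delta> ` carrier G1) #>\<^bsub>Z\<^esub> j0 G1 G0 y) =
    (\<delta> ` carrier G1) #>\<^bsub>Z\<^esub> j0 G1 G0 (x \<otimes>\<^bsub>G0\<^esub> y)"
proof -
  note xc = ZG1_carrier[OF x]
  have "{(d c \<otimes>\<^bsub>G0\<^esub> x, principal_der c) | c. c \<in> carrier G1} <#>\<^bsub>Z\<^esub>
      {(d c \<otimes>\<^bsub>G0\<^esub> y, principal_der c) | c. c \<in> carrier G1} =
      {(d c \<otimes>\<^bsub>G0\<^esub> (x \<otimes>\<^bsub>G0\<^esub> y), principal_der c) | c. c \<in> carrier G1}"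
  proof (intro equalityI subsetI)
    fix p assume "p \<in> {(d c \<otimes>\<^bsub>G0\<^esub> x, principal_der c) | c. c \<in> carrier G1} <#>\<^bsub>Z\<^esub>
      {(d c \<otimes>\<^bsub>G0\<^esub> y, principal_der c) | c. c \<in> carrier G1}"
    then obtain c c' where c: "c \<in> carrier G1" and c': "c' \<in> carrier G1"
      and "p = (d c \<otimes>\<^bsub>G0\<^esub> x, principal_der c) \<otimes>\<^bsub>Z\<^esub> (d c' \<otimes>\<^bsub>G0\<^esub> y, principal_der c')"
      by (auto simp: set_mult_def)
    then have "p = (d (c \<otimes>\<^bsub>G1\<^esub> c') \<otimes>\<^bsub>G0\<^esub> (x \<otimes>\<^bsub>G0\<^esub> y), principal_der (c \<otimes>\<^bsub>G1\<^esub> c'))"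
      by (simp only: Z0_mult_principal[OF c c' x y])
    then show "p \<in> {(d c \<otimes>\<^bsub>G0\<^esub> (x \<otimes>\<^bsub>G0\<^esub> y), principal_der c) | c. c \<in> carrier G1}"
      using G1.m_closed[OF c c'] by blast
  next
    fix p assume "p \<in> {(d c \<otimes>\<^bsub>G0\<^esub> (x \<otimes>\<^bsub>G0\<^esub> y), principal_der c) | c. c \<in> carrier G1}"
    then obtain c where c: "c \<in> carrier G1" "p = (d c \<otimes>\<^bsub>G0\<^esub> (x \<otimes>\<^bsub>G0\<^esub> y), principal_der c)"
      by blast
    then have "p = (d c \<otimes>\<^bsub>G0\<^esub> x, principal_der c) \<otimes>\<^bsub>Z\<^esub> (d \<one>\<^bsub>G1\<^esub> \<otimes>\<^bsub>G0\<^esub> y, principal_der \<one>\<^bsub>G1\<^esub>)"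
      using Z0_mult_principal[OF c(1) G1.one_closed x y] by simp
    then show "p \<in> {(d c \<otimes>\<^bsub>G0\<^esub> x, principal_der c) | c. c \<in> carrier G1} <#>\<^bsub>Z\<^esub>
      {(d c \<otimes>\<^bsub>G0\<^esub> y, principal_der c) | c. c \<in> carrier G1}"
      unfolding set_mult_def using c(1) G1.one_closed by blast
  qed
  then show ?thesis using xc y by (simp add: Zdelta_rcoset)
qed

lemma pi0_map_rcoset:
  assumes x: "x \<in> ZG"
  shows "pi0_map G1 Z \<delta> (j0 G1 G0) ((d ` H0) #>\<^bsub>G0\<^esub> x) = (\<delta> ` carrier G1) #>\<^bsub>Z\<^esub> j0 G1 G0 x"
proof -
  note xc = ZG1_carrier[OF x]
  have absorb: "\<delta> c \<otimes>\<^bsub>Z\<^esub> j0 G1 G0 (d a \<otimes>\<^bsub>G0\<^esub> x) =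
      (d (c \<otimes>\<^bsub>G1\<^esub> a) \<otimes>\<^bsub>G0\<^esub> x, principal_der (c \<otimes>\<^bsub>G1\<^esub> a))"
    if c: "c \<in> carrier G1" and a: "a \<in> H0" for c a
    using c H0inv_carrier[OF a] xc
    by (simp add: Zdelta_mult_j0 principal_der_mult_H0inv[OF c a] G0.m_assoc)
  have "pi0_map G1 Z \<delta> (j0 G1 G0) ((d ` H0) #>\<^bsub>G0\<^esub> x) =
      {\<delta> c \<otimes>\<^bsub>Z\<^esub> j0 G1 G0 (d a \<otimes>\<^bsub>G0\<^esub> x) | c a. c \<in> carrier G1 \<and> a \<in> H0}"
    by (auto simp: pi0_map_def set_mult_def r_coset_def)
  also have "\<dots> = {(d c \<otimes>\<^bsub>G0\<^esub> x, principal_der c) | c. c \<in> carrier G1}"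
  proof (intro equalityI subsetI)
    fix p assume "p \<in> {\<delta> c \<otimes>\<^bsub>Z\<^esub> j0 G1 G0 (d a \<otimes>\<^bsub>G0\<^esub> x) | c a. c \<in> carrier G1 \<and> a \<in> H0}"
    then obtain c a where c: "c \<in> carrier G1" and a: "a \<in> H0"
      and "p = \<delta> c \<otimes>\<^bsub>Z\<^esub> j0 G1 G0 (d a \<otimes>\<^bsub>G0\<^esub> x)" by blast
    then have "p = (d (c \<otimes>\<^bsub>G1\<^esub> a) \<otimes>\<^bsub>G0\<^esub> x, principal_der (c \<otimes>\<^bsub>G1\<^esub> a))"
      by (simp only: absorb)
    then show "p \<in> {(d c \<otimes>\<^bsub>G0\<^esub> x, principal_der c) | c. c \<in> carrier G1}"
      using G1.m_closed[OF c H0inv_carrier[OF a]] by blast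
  next
    fix p assume "p \<in> {(d c \<otimes>\<^bsub>G0\<^esub> x, principal_der c) | c. c \<in> carrier G1}"
    then obtain c where c: "c \<in> carrier G1" and "p = (d c \<otimes>\<^bsub>G0\<^esub> x, principal_der c)" by blast
    moreover have one: "\<one>\<^bsub>G1\<^esub> \<in> H0" by (rule subgroup.one_closed[OF H0inv_subgroup])
    ultimately have "p = \<delta> c \<otimes>\<^bsub>Z\<^esub> j0 G1 G0 (d \<one>\<^bsub>G1\<^esub> \<otimes>\<^bsub>G0\<^esub> x)"
      using absorb[OF c one] by simp
    then show "p \<in> {\<delta> c \<otimes>\<^bsub>Z\<^esub> j0 G1 G0 (d a \<otimes>\<^bsub>G0\<^esub> x) | c a. c \<in> carrier G1 \<and> a \<in> H0}"
      using c one by blast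
  qed
  finally show ?thesis using xc by (simp add: Zdelta_rcoset)
qed

lemma invariants_image_normal: "d ` H0 \<lhd> N0"
proof -
  interpret dN: group_hom N1 N0 d
    using crossed_module_invariants by (simp add: crossed_module_def group_hom_def group_hom_axioms_def)
  interpret N0: comm_group N0
    using G0.subgroup_imp_group[OF ZG1_subgroup]
    by (rule group.group_comm_groupI) (simp add: ZG1_central ZG1_carrier)
  show ?thesis using N0.subgroup_imp_normal dN.img_is_subgroup by simp
qed

lemma pi0_invariants_carrier:
  "carrier (pi0 N1 N0 d) = (\<lambda>x. (d ` H0) #>\<^bsub>G0\<^esub> x) ` ZG"
  by (auto simp: pi0_def FactGroup_def RCOSETS_def)

lemma pi0_map_hom: "pi0_map G1 Z \<delta> (j0 G1 G0) \<in> hom (pi0 N1 N0 d) (pi0 G1 Z \<delta>)"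
proof (rule homI)
  fix C assume "C \<in> carrier (pi0 N1 N0 d)"
  then obtain x where x: "x \<in> ZG" and C: "C = (d ` H0) #>\<^bsub>G0\<^esub> x"
    by (auto simp: pi0_invariants_carrier)
  show "pi0_map G1 Z \<delta> (j0 G1 G0) C \<in> carrier (pi0 G1 Z \<delta>)"
    using j0_in_Z0[OF x] by (auto simp: C pi0_map_rcoset[OF x] pi0_def FactGroup_def RCOSETS_def)
next
  fix C D assume "C \<in> carrier (pi0 N1 N0 d)" "D \<in> carrier (pi0 N1 N0 d)"
  then obtain x y where x: "x \<in> ZG" and y: "y \<in> ZG"
    and C: "C = (d ` H0) #>\<^bsub>G0\<^esub> x" and D: "D = (d ` H0) #>\<^bsub>G0\<^esub> y"
    by (auto simp: pi0_invariants_carrier)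
  have xy: "x \<otimes>\<^bsub>G0\<^esub> y \<in> ZG" by (rule subgroup.m_closed[OF ZG1_subgroup x y])
  have "C \<otimes>\<^bsub>pi0 N1 N0 d\<^esub> D = (d ` H0) #>\<^bsub>G0\<^esub> (x \<otimes>\<^bsub>G0\<^esub> y)"
    using normal.rcos_sum[OF invariants_image_normal, of x y] x y
    by (simp add: C D pi0_def FactGroup_def)
  then show "pi0_map G1 Z \<delta> (j0 G1 G0) (C \<otimes>\<^bsub>pi0 N1 N0 d\<^esub> D) =
      pi0_map G1 Z \<delta> (j0 G1 G0) C \<otimes>\<^bsub>pi0 G1 Z \<delta>\<^esub> pi0_map G1 Z \<delta> (j0 G1 G0) D"
    using ZG1_carrier[OF y]
    by (simp add: C D pi0_map_rcoset x y xy Zdelta_rcoset_mult pi0_def FactGroup_def)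
qed

lemma pi0_map_inj: "inj_on (pi0_map G1 Z \<delta> (j0 G1 G0)) (carrier (pi0 N1 N0 d))"
proof (rule inj_onI)
  fix C D assume "C \<in> carrier (pi0 N1 N0 d)" "D \<in> carrier (pi0 N1 N0 d)"
    and eq: "pi0_map G1 Z \<delta> (j0 G1 G0) C = pi0_map G1 Z \<delta> (j0 G1 G0) D"
  then obtain x y where x: "x \<in> ZG" and y: "y \<in> ZG"
    and C: "C = (d ` H0) #>\<^bsub>G0\<^esub> x" and D: "D = (d ` H0) #>\<^bsub>G0\<^esub> y"
    by (auto simp: pi0_invariants_carrier)
  note xc = ZG1_carrier[OF x] and yc = ZG1_carrier[OF y]
  have "(d \<one>\<^bsub>G1\<^esub> \<otimes>\<^bsub>G0\<^esub> x, principal_der \<one>\<^bsub>G1\<^esub>) \<in> (\<delta> ` carrier G1) #>\<^bsub>Z\<^esub> j0 G1 G0 x"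
    unfolding Zdelta_rcoset[OF xc] using G1.one_closed by blast
  then have "(x, principal_der \<one>\<^bsub>G1\<^esub>) \<in> (\<delta> ` carrier G1) #>\<^bsub>Z\<^esub> j0 G1 G0 y"
    using eq xc by (simp add: C D pi0_map_rcoset x y)
  then obtain c where c: "c \<in> carrier G1" and x_eq: "x = d c \<otimes>\<^bsub>G0\<^esub> y"
    and "principal_der c = principal_der \<one>\<^bsub>G1\<^esub>"
    using yc by (auto simp: Zdelta_rcoset)
  then have "c \<in> H0" by (simp add: principal_der_eq_one_iff)
  then have "x \<in> (d ` H0) #>\<^bsub>N0\<^esub> y" by (auto simp: x_eq r_coset_def)
  then show "C = D"
    using group.repr_independence[OF G0.subgroup_imp_group[OF ZG1_subgroup] _ _
        normal.axioms(1)[OF invariants_image_normal]] y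
    by (simp add: C D)
qed

end

theorem mainTheorem11:
  fixes G1 :: "'a monoid" and G0 :: "'b monoid"
    and d :: "'a \<Rightarrow> 'b" and act :: "'b \<Rightarrow> 'a \<Rightarrow> 'a"
  assumes cm: "crossed_module G1 G0 d act"
  defines "N1 \<equiv> G1\<lparr>carrier := H0inv G1 G0 act\<rparr>"
      and "N0 \<equiv> G0\<lparr>carrier := ZG1 G1 G0 act\<rparr>"
      and "Z \<equiv> Z0 G1 G0 d act"
      and "\<delta> \<equiv> Zdelta G1 G0 d act"
  shows "d ` H0inv G1 G0 act \<subseteq> ZG1 G1 G0 act
    \<and> crossed_module N1 N0 d (\<lambda>x a. a)
    \<and> cm_morphism N1 N0 d (\<lambda>x a. a) G1 Z \<delta> (Zact act) (\<lambda>a. a) (j0 G1 G0)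
    \<and> inj_on (\<lambda>a. a) (carrier N1) \<and> inj_on (j0 G1 G0) (carrier N0)
    \<and> (\<lambda>a. a) \<in> iso (pi1 N1 N0 d) (pi1 G1 Z \<delta>)
    \<and> pi0_map G1 Z \<delta> (j0 G1 G0) \<in> hom (pi0 N1 N0 d) (pi0 G1 Z \<delta>)
         \<and> inj_on (pi0_map G1 Z \<delta> (j0 G1 G0)) (carrier (pi0 N1 N0 d))"
proof -
  interpret xmod G1 G0 d act by (rule xmod.intro[OF cm])
  show ?thesis
    unfolding N1_def N0_def Z_def \<delta>_def
    using d_H0inv crossed_module_invariants invariants_morphism pi1_iso pi0_map_hom pi0_map_inj
    by (auto simp: inj_on_def j0_def)
qed

end
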